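(* Let $n\ge4$, $k=3$, $d$ an integer, and let $A_c=(\alpha_c,n_1,d_1,k_1,n_2,d_2,k_2)$ be an allowable critical data set for type $(n,d,3)$ with $k_1=2$, $k_2=1$. Then $C_{21}>0$, except in the following four cases, where $C_{21}=0$: (a) $(n_1,n_2,d_1,d_2)=(4,3,7,6)$, $\alpha_c=\frac32$; (b) $(n_1,n_2,d_1,d_2)=(3,3,5,6)$, $\alpha_c=1$; (c) $(n_1,n_2,d_1,d_2)=(2,3,3,6)$, $\alpha_c=\frac34$; (d) $(n_1,n_2,d_1,d_2)=(1,3,1,6)$, $\alpha_c=\frac35$.
   Context: Let $0<k<n$ and $d$ be integers. Write $d=na-t$ with integers $a,t$, $0\le t<n$, and $ka=l(n-k)+t+m$ with integers $l,m$, $0\le m<n-k$. A critical data set for type $(n,d,k)$ is a tuple $A_c=(\alpha_c,n_1,d_1,k_1,n_2,d_2,k_2)$ with integers $n_i\ge1$, $k_i\ge0$, $d_i$ such that $n_1+n_2=n$, $d_1+d_2=d$, $k_1+k_2=k$, $\frac{d_2}{n_2}>\frac{d_1}{n_1}$, $\frac{k_1}{n_1}>\frac{k_2}{n_2}$, and $\alpha_c=\frac{d_2n_1-d_1n_2}{n_2k_1-n_1k_2}$. It is allowable if moreover $\frac tk<\alpha_c<\frac{ln+t}{k}$, $d\ge\frac1k(n^2-1)-(n-k)$, $d_1\ge\frac1{k_1}(n_1^2-1)-(n_1-k_1)$, and either ($k_2=0$ and $n_2=1$) or ($k_2\ge1$ and $d_2\ge\frac1{k_2}(n_2^2-1)-(n_2-k_2)$).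 Define $C_{21}=-n_1n_2+d_2n_1-d_1n_2+k_2(d_1+n_1-k_1)$. *)

theory Defs
  imports Complex_Main
begin

text \<open>For type (n,d,k) with 0<k<n: write d = n a - t with 0 \<le> t < n,
  and k a = l (n-k) + t + m with 0 \<le> m < n-k.\<close>

definition t_of :: "int \<Rightarrow> int \<Rightarrow> int" where
  "t_of n d = (- d) mod n"

definition a_of :: "int \<Rightarrow> int \<Rightarrow> int" where
  "a_of n d = (d + t_of n d) div n"

definition l_of :: "int \<Rightarrow> int \<Rightarrow> int \<Rightarrow> int" where
  "l_of n d k = (k * a_of n d - t_of n d) div (n - k)"

definition m_of :: "int \<Rightarrow> int \<Rightarrow> int \<Rightarrow> int" where
  "m_of n d k = (k * a_of n d - t_of n d) mod (n - k)"

definition critical_data_set ::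
  "int \<Rightarrow> int \<Rightarrow> int \<Rightarrow> real \<Rightarrow> int \<Rightarrow> int \<Rightarrow> int \<Rightarrow> int \<Rightarrow> int \<Rightarrow> int \<Rightarrow> bool" where
  "critical_data_set n d k \<alpha>c n1 d1 k1 n2 d2 k2 \<longleftrightarrow>
     n1 \<ge> 1 \<and> n2 \<ge> 1 \<and> k1 \<ge> 0 \<and> k2 \<ge> 0 \<and>
     n1 + n2 = n \<and> d1 + d2 = d \<and> k1 + k2 = k \<and>
     real_of_int d2 / real_of_int n2 > real_of_int d1 / real_of_int n1 \<and>
     real_of_int k1 / real_of_int n1 > real_of_int k2 / real_of_int n2 \<and>
     \<alpha>c = real_of_int (d2 * n1 - d1 * n2) / real_of_int (n2 * k1 - n1 * k2)"

definition allowable_critical_data_set ::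
  "int \<Rightarrow> int \<Rightarrow> int \<Rightarrow> real \<Rightarrow> int \<Rightarrow> int \<Rightarrow> int \<Rightarrow> int \<Rightarrow> int \<Rightarrow> int \<Rightarrow> bool" where
  "allowable_critical_data_set n d k \<alpha>c n1 d1 k1 n2 d2 k2 \<longleftrightarrow>
     critical_data_set n d k \<alpha>c n1 d1 k1 n2 d2 k2 \<and>
     real_of_int (t_of n d) / real_of_int k < \<alpha>c \<and>
     \<alpha>c < real_of_int (l_of n d k * n + t_of n d) / real_of_int k \<and>
     real_of_int d \<ge> (real_of_int n ^ 2 - 1) / real_of_int k - real_of_int (n - k) \<and>
     real_of_int d1 \<ge> (real_of_int n1 ^ 2 - 1) / real_of_int k1 - real_of_int (n1 - k1) \<and>
     ((k2 = 0 \<and> n2 = 1) \<or>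
      (k2 \<ge> 1 \<and> real_of_int d2 \<ge> (real_of_int n2 ^ 2 - 1) / real_of_int k2 - real_of_int (n2 - k2)))"

definition C21 :: "int \<Rightarrow> int \<Rightarrow> int \<Rightarrow> int \<Rightarrow> int \<Rightarrow> int \<Rightarrow> int" where
  "C21 n1 d1 k1 n2 d2 k2 = - n1 * n2 + d2 * n1 - d1 * n2 + k2 * (d1 + n1 - k1)"

end

theory Submission
  imports Defs
begin

text \<open>The slope numerator \<open>D = d\<^sub>2 n\<^sub>1 - d\<^sub>1 n\<^sub>2\<close> satisfies
  \<open>D + n\<^sub>1 t \<equiv> 0 (mod n)\<close>, so the condition \<open>\<alpha>\<^sub>c > t/k\<close>, i.e. \<open>s t < k D\<close> with
  \<open>s = n\<^sub>2 k\<^sub>1 - n\<^sub>1 k\<^sub>2\<close>, improves to \<open>s t + n \<le> k D\<close>; for \<open>(k\<^sub>1, k\<^sub>2) = (2, 1)\<close> this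
  forces \<open>D \<ge> n\<^sub>2\<close>. On the other hand
  \<open>n\<^sub>2 C\<^sub>2\<^sub>1 = (n\<^sub>2 - 1) D + n\<^sub>1 (d\<^sub>2 - n\<^sub>2\<^sup>2 + n\<^sub>2) - 2 n\<^sub>2\<close>, whose middle term is
  nonnegative by the bound on \<open>d\<^sub>2\<close>. So \<open>C\<^sub>2\<^sub>1 \<le> 0\<close> forces \<open>(n\<^sub>2 - 1) n\<^sub>2 \<le> 2 n\<^sub>2\<close>,
  i.e. \<open>n\<^sub>2 \<le> 3\<close>, and among the few remaining cases only \<open>n\<^sub>2 = 3\<close>, \<open>D = 3\<close>,
  \<open>d\<^sub>2 = 6\<close> survives; it yields the four exceptions, \<open>n\<^sub>1 = 5\<close> being excluded by the
  bound on \<open>d\<close>.\<close>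

lemma t_of_nonneg: "0 < n \<Longrightarrow> 0 \<le> t_of n d"
  unfolding t_of_def by simp

lemma dvd_add_t_of: "n dvd d + t_of n d"
  unfolding t_of_def dvd_eq_mod_eq_0 by (simp add: mod_add_right_eq)

lemma degree_bound_iff:
  fixes n d k :: int
  assumes "0 < k"
  shows "(real_of_int n ^ 2 - 1) / real_of_int k - real_of_int (n - k) \<le> real_of_int d
    \<longleftrightarrow> n\<^sup>2 - 1 - k * (n - k) \<le> k * d"
proof -
  have "(real_of_int n ^ 2 - 1) / real_of_int k - real_of_int (n - k) \<le> real_of_int d
    \<longleftrightarrow> real_of_int n ^ 2 - 1 - real_of_int k * real_of_int (n - k) \<le> real_of_int k * real_of_int d"
    using assms by (simp add: field_simps)
  also have "\<dots> \<longleftrightarrow> real_of_int (n\<^sup>2 - 1 - k * (n - k)) \<le> real_of_int (k * d)"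
    by simp
  also have "\<dots> \<longleftrightarrow> n\<^sup>2 - 1 - k * (n - k) \<le> k * d"
    by (rule of_int_le_iff)
  finally show ?thesis .
qed

lemma slope_numerator_cong:
  fixes n n1 n2 d d1 d2 t :: int
  assumes "n = n1 + n2" and "d = d1 + d2" and "n dvd d + t"
  shows "n dvd (d2 * n1 - d1 * n2) + n1 * t"
proof -
  have "(d2 * n1 - d1 * n2) + n1 * t = n1 * (d + t) - n * d1"
    using assms(1,2) by (simp add: algebra_simps)
  then show ?thesis
    using assms(3) by simp
qed

lemma critical_data_set_numerators_pos:
  assumes "critical_data_set n d k \<alpha>c n1 d1 k1 n2 d2 k2"
  shows "0 < d2 * n1 - d1 * n2" and "0 < n2 * k1 - n1 * k2"
proof -
  from assms have n1: "0 < real_of_int n1" and n2: "0 < real_of_int n2"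
    and "real_of_int d1 / real_of_int n1 < real_of_int d2 / real_of_int n2"
    and "real_of_int k2 / real_of_int n2 < real_of_int k1 / real_of_int n1"
    unfolding critical_data_set_def by auto
  then have "real_of_int (d1 * n2) < real_of_int (d2 * n1)"
    and "real_of_int (n1 * k2) < real_of_int (n2 * k1)"
    by (simp_all add: field_simps)
  then show "0 < d2 * n1 - d1 * n2" and "0 < n2 * k1 - n1 * k2"
    unfolding of_int_less_iff by simp_all
qed

lemma allowable_t_of_mult_less:
  assumes "allowable_critical_data_set n d k \<alpha>c n1 d1 k1 n2 d2 k2"
  shows "(n2 * k1 - n1 * k2) * t_of n d < k * (d2 * n1 - d1 * n2)"
proof -
  define D s where "D = d2 * n1 - d1 * n2" and "s = n2 * k1 - n1 * k2"
  have "critical_data_set n d k \<alpha>c n1 d1 k1 n2 d2 k2"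
    using assms unfolding allowable_critical_data_set_def by blast
  then have "0 < s" and "0 < n1" and "0 < n2" and "0 \<le> k2" and "k = k1 + k2"
    and \<alpha>c: "\<alpha>c = real_of_int D / real_of_int s"
    using critical_data_set_numerators_pos(2) unfolding critical_data_set_def D_def s_def
    by auto
  have "0 < k"
  proof -
    have "0 \<le> n1 * k2"
      using \<open>0 < n1\<close> \<open>0 \<le> k2\<close> by simp
    then have "0 < n2 * k1"
      using \<open>0 < s\<close> unfolding s_def by simp
    then have "0 < k1"
      using \<open>0 < n2\<close> by (simp add: zero_less_mult_iff)
    then show ?thesis
      using \<open>0 \<le> k2\<close> \<open>k = k1 + k2\<close> by simp
  qed
  have "real_of_int (t_of n d) / real_of_int k < real_of_int D / real_of_int s"
    using assms \<alpha>c unfolding allowable_critical_data_set_def by blast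
  then have "real_of_int (s * t_of n d) < real_of_int (k * D)"
    using \<open>0 < k\<close> \<open>0 < s\<close> by (simp add: field_simps)
  then show ?thesis
    unfolding D_def s_def of_int_less_iff .
qed

lemma allowable_slope_gap:
  assumes "allowable_critical_data_set n d k \<alpha>c n1 d1 k1 n2 d2 k2"
  shows "(n2 * k1 - n1 * k2) * t_of n d + n \<le> k * (d2 * n1 - d1 * n2)"
proof -
  define D s t where "D = d2 * n1 - d1 * n2" and "s = n2 * k1 - n1 * k2" and "t = t_of n d"
  have n: "n = n1 + n2" "d = d1 + d2" "k = k1 + k2" "0 < n"
    using assms unfolding allowable_critical_data_set_def critical_data_set_def by auto
  have "n dvd D + n1 * t"
    using slope_numerator_cong[OF n(1,2) dvd_add_t_of] unfolding D_def t_def .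
  moreover have "k * D - s * t = k * (D + n1 * t) - k1 * n * t"
    unfolding s_def n(1,3) by (simp add: algebra_simps)
  ultimately have "n dvd k * D - s * t"
    by simp
  moreover have "0 < k * D - s * t"
    using allowable_t_of_mult_less[OF assms] unfolding D_def s_def t_def by simp
  ultimately have "n \<le> k * D - s * t"
    by (rule zdvd_imp_le)
  then show ?thesis
    unfolding D_def s_def t_def by simp
qed

lemma allowable_n2_le_slope_numerator:
  assumes "allowable_critical_data_set n d 3 \<alpha>c n1 d1 2 n2 d2 1"
  shows "n2 \<le> d2 * n1 - d1 * n2"
proof -
  define D t where "D = d2 * n1 - d1 * n2" and "t = t_of n d"
  have n: "n = n1 + n2" "d = d1 + d2" "1 \<le> n1" "1 \<le> n2"
    using assms unfolding allowable_critical_data_set_def critical_data_set_def by auto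
  have crit: "critical_data_set n d 3 \<alpha>c n1 d1 2 n2 d2 1"
    using assms unfolding allowable_critical_data_set_def by blast
  have "0 < D" and s: "0 < 2 * n2 - n1"
    using critical_data_set_numerators_pos[OF crit] unfolding D_def by (simp_all add: mult.commute)
  have gap: "(2 * n2 - n1) * t + n \<le> 3 * D"
    using allowable_slope_gap[OF assms] unfolding D_def t_def by (simp add: mult.commute)
  have "0 \<le> t"
    using t_of_nonneg n by (simp add: t_def)
  then consider "t = 0" | "1 \<le> t"
    by linarith
  then show ?thesis
  proof cases
    case 1
    then have "n dvd D"
      using slope_numerator_cong[OF n(1,2) dvd_add_t_of] unfolding D_def t_def by simp
    then have "n \<le> D"
      using \<open>0 < D\<close> by (rule zdvd_imp_le)
    then show ?thesis
      using n unfolding D_def by simp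
  next
    case 2
    then have "2 * n2 - n1 \<le> (2 * n2 - n1) * t"
      using s by simp
    then show ?thesis
      using gap n unfolding D_def by simp
  qed
qed

lemma n2_mult_C21:
  "n2 * C21 n1 d1 k1 n2 d2 1
    = (n2 - 1) * (d2 * n1 - d1 * n2) + n1 * (d2 - n2\<^sup>2 + n2) - k1 * n2"
  unfolding C21_def by (simp add: algebra_simps power2_eq_square)

lemma C21_nonpos_imp_exceptional:
  fixes n d n1 n2 d1 d2 t :: int
  assumes n: "n = n1 + n2" and d: "d = d1 + d2"
    and "1 \<le> n1" and "4 \<le> n" and "0 < 2 * n2 - n1"
    and D: "n2 \<le> d2 * n1 - d1 * n2"
    and gap: "(2 * n2 - n1) * t + n \<le> 3 * (d2 * n1 - d1 * n2)"
    and "0 \<le> t" and "n dvd d + t"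
    and deg: "n\<^sup>2 - 1 - 3 * (n - 3) \<le> 3 * d"
    and deg1: "n1\<^sup>2 - 1 - 2 * (n1 - 2) \<le> 2 * d1"
    and deg2: "n2\<^sup>2 - n2 \<le> d2"
    and C: "C21 n1 d1 2 n2 d2 1 \<le> 0"
  shows "n2 = 3 \<and> d2 = 6 \<and> d1 = 2 * n1 - 1 \<and> n1 \<le> 4"
proof -
  define D e where "D = d2 * n1 - d1 * n2" and "e = d2 - n2\<^sup>2 + n2"
  have "0 \<le> e"
    using deg2 unfolding e_def by simp
  then have "e \<le> n1 * e"
    using \<open>1 \<le> n1\<close> by (simp add: mult_le_cancel_right1)
  have "1 \<le> n2"
    using assms(3,5) by simp
  then have "n2 * C21 n1 d1 2 n2 d2 1 \<le> 0"
    using C by (simp add: mult_nonneg_nonpos)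
  then have DC: "(n2 - 1) * D + n1 * e \<le> 2 * n2"
    using n2_mult_C21[of n2 n1 d1 2 d2] unfolding D_def e_def by linarith
  have "(n2 - 1) * n2 \<le> (n2 - 1) * D"
    using D \<open>1 \<le> n2\<close> unfolding D_def by (simp add: mult_left_mono)
  then have "n2 * (n2 - 3) \<le> 0"
    using DC \<open>e \<le> n1 * e\<close> \<open>0 \<le> e\<close> by (simp add: algebra_simps)
  then have "n2 \<le> 3"
    using \<open>1 \<le> n2\<close> by (simp add: mult_le_0_iff)
  moreover have "n2 \<noteq> 1"
    using assms(4,5) n by auto
  ultimately consider "n2 = 2" | "n2 = 3"
    using \<open>1 \<le> n2\<close> by linarith
  then show ?thesis
  proof cases
    case 1
    then have "n1 = 2 \<or> n1 = 3"
      using assms(4,5) n by auto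
    then have False
    proof
      assume "n1 = 2"
      then have "d1 = 2 \<and> d2 = 3"
        using 1 D DC deg1 unfolding D_def e_def by (simp add: power2_eq_square)
      then have "2 * t + 4 \<le> 6" and "4 dvd 5 + t"
        using 1 \<open>n1 = 2\<close> n d gap \<open>n dvd d + t\<close> by simp_all
      then show False
        using \<open>0 \<le> t\<close> by presburger
    next
      assume "n1 = 3"
      then show False
        using 1 D DC deg1 unfolding D_def e_def by (simp add: power2_eq_square) presburger
    qed
    then show ?thesis ..
  next
    case 2
    have "3 \<le> D" and "2 * D + n1 * e \<le> 6"
      using D DC 2 unfolding D_def by simp_all
    then have "D = 3" and "n1 * e \<le> 0"
      using \<open>e \<le> n1 * e\<close> \<open>0 \<le> e\<close> by linarith+
    then have "e = 0"
      using \<open>e \<le> n1 * e\<close> \<open>0 \<le> e\<close> by simp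
    then have d2: "d2 = 6" and d1: "d1 = 2 * n1 - 1"
      using 2 \<open>D = 3\<close> unfolding e_def D_def by (simp_all add: power2_eq_square)
    have "n1 \<noteq> 5"
      using deg n d 2 d1 d2 by (auto simp: power2_eq_square)
    then have "n1 \<le> 4"
      using assms(5) 2 by simp
    then show ?thesis
      using 2 d1 d2 by simp
  qed
qed

theorem proposition7p3:
  fixes n d n1 d1 n2 d2 :: int and \<alpha>c :: real
  assumes "n \<ge> 4"
    and "allowable_critical_data_set n d 3 \<alpha>c n1 d1 2 n2 d2 1"
  shows "(if ((n1, n2, d1, d2) = (4, 3, 7, 6) \<and> \<alpha>c = 3/2) \<or>
             ((n1, n2, d1, d2) = (3, 3, 5, 6) \<and> \<alpha>c = 1) \<or>
             ((n1, n2, d1, d2) = (2, 3, 3, 6) \<and> \<alpha>c = 3/4) \<or>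
             ((n1, n2, d1, d2) = (1, 3, 1, 6) \<and> \<alpha>c = 3/5)
         then C21 n1 d1 2 n2 d2 1 = 0
         else C21 n1 d1 2 n2 d2 1 > 0)"
proof -
  have crit: "critical_data_set n d 3 \<alpha>c n1 d1 2 n2 d2 1"
    using assms(2) unfolding allowable_critical_data_set_def by blast
  have n: "n = n1 + n2" "d = d1 + d2" "1 \<le> n1"
    and \<alpha>c: "\<alpha>c = real_of_int (d2 * n1 - d1 * n2) / real_of_int (2 * n2 - n1)"
    using crit unfolding critical_data_set_def by (auto simp: mult.commute)
  have deg: "n\<^sup>2 - 1 - 3 * (n - 3) \<le> 3 * d" "n1\<^sup>2 - 1 - 2 * (n1 - 2) \<le> 2 * d1"
    "n2\<^sup>2 - n2 \<le> d2"
    using assms(2) unfolding allowable_critical_data_set_def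
    by (simp_all only: degree_bound_iff zero_less_numeral zero_less_one) auto
  have s: "0 < 2 * n2 - n1"
    using critical_data_set_numerators_pos(2)[OF crit] by simp
  have gap: "(2 * n2 - n1) * t_of n d + n \<le> 3 * (d2 * n1 - d1 * n2)"
    using allowable_slope_gap[OF assms(2)] by (simp add: mult.commute)
  have "0 \<le> t_of n d"
    using t_of_nonneg \<open>4 \<le> n\<close> by simp
  show ?thesis
  proof (cases "C21 n1 d1 2 n2 d2 1 \<le> 0")
    case True
    have "n2 = 3 \<and> d2 = 6 \<and> d1 = 2 * n1 - 1 \<and> n1 \<le> 4"
      by (rule C21_nonpos_imp_exceptional[OF n(1,2) \<open>1 \<le> n1\<close> \<open>4 \<le> n\<close> s
          allowable_n2_le_slope_numerator[OF assms(2)] gap \<open>0 \<le> t_of n d\<close> dvd_add_t_of deg True])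
    moreover have "n1 = 1 \<or> n1 = 2 \<or> n1 = 3 \<or> n1 = 4"
      using calculation \<open>1 \<le> n1\<close> by auto
    ultimately show ?thesis
      by (elim conjE disjE) (simp_all add: \<alpha>c C21_def)
  next
    case False
    then show ?thesis
      by (auto simp: C21_def)
  qed
qed

end
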